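(* Let $\mathbb{L}\subseteq\mathbb{R}^d\times\mathbb{R}$ be any closed convex cone, assume Boundedness, and let $A_0,\dots,A_T\in\mathcal{A}$. Let $(y_t,b_t)$ be generated by the projected strategic perceptron with cone $\mathbb{L}$ and stepsize $\gamma=1$, and $\mathcal{M}_T=\{t\in\{0,\dots,T\}:\hat\ell(r(A_t,y_t,b_t),y_t,b_t)\ne\ell(A_t)\}$. Then for every $(y,b)\in\mathbb{L}\setminus\{0\}$, $$|\mathcal{M}_T|-\sum_{t\in\mathcal{M}_T}L_{\mathrm{hinge}}\big((y,b);(s(A_t,y_t,b_t),1),\ell(A_t)\big)\le\sqrt{\|y\|_2^2+b^2}\,\sqrt{\widetilde D^2+1}\,\sqrt{|\mathcal{M}_T|}.$$
   Context: Setting: $\mathcal{A}\subseteq\mathbb{R}^d$, labels $\ell(A)\in\{\pm1\}$; $\operatorname{sign}(0)=+1$; norm $\|\cdot\|$ with dual $\|y\|_*=\max_{\|w\|\le1}y^\top w$; constant $c>0$; a fixed selection $v$ with $v(0)=0$ and $v(y)\in\arg\max_{\|w\|\le1}y^\top w$ for $y\ne0$, with $v(\lambda y)=v(y)$ for $\lambda>0$. Predicted label $\hat\ell(x,y,b)=\operatorname{sign}(y^\top x+b-2\|y\|_*/c)$. Response: for $y\ne0$, $r(A,y,b)=A+(\tfrac2c-\tfrac{y^\top A+b}{\|y\|_*})v(y)$ if $0\le\tfrac{y^\top A+b}{\|y\|_*}<\tfrac2c$, else $A$. Proxy: for $y\ne0$, $s(A,y,b)=A-\tfrac{y^\top A+b}{\|y\|_*}v(y)$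 if $0\le\tfrac{y^\top A+b}{\|y\|_*}<\tfrac2c$ and $\ell(A)=-1$; $=A+(\tfrac2c-\tfrac{y^\top A+b}{\|y\|_*})v(y)$ if the range condition holds and $\ell(A)=+1$; $=A$ otherwise; $r(A,0,b)=s(A,0,b)=A$. Boundedness: $D:=\sup_{A\in\mathcal{A}}\|A\|_2<\infty$; $C_{\|\cdot\|}=\max_y\|v(y)\|_2$; $\widetilde D=D+\tfrac2cC_{\|\cdot\|}$. Hinge loss: $L_{\mathrm{hinge}}(q;\xi,\ell)=\max\{0,1-\ell\,q^\top\xi\}$ for $q,\xi\in\mathbb{R}^{d+1}$. Projected strategic perceptron with closed convex cone $\mathbb{L}$ and stepsize $\gamma>0$: $q_0=(y_0,b_0)=(0,0)$; for $t=0,1,\dots,T$: agent $A_t$ is shown $(y_t,b_t)$, responds $r(A_t,y_t,b_t)$, is predicted $\hat\ell(r(A_t,y_t,b_t),y_t,b_t)$; with $\xi_t=(s(A_t,y_t,b_t),1)$, set $z_{t+1}=q_t+\gamma\ell(A_t)\xi_t$ if the prediction differs from $\ell(A_t)$, else $z_{t+1}=q_t$; $q_{t+1}=(y_{t+1},b_{t+1})=\Pi_{\mathbb{L}}(z_{t+1})$ (Euclidean projection). *)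

theory Defs
  imports "HOL-Analysis.Analysis"
begin

text \<open>Setting: agents live in a Euclidean space 'a (= R^d); nrm is an arbitrary norm,
  c > 0, v is the fixed dual-norm selection, lab is the labelling function.\<close>

definition is_norm :: "('a::real_vector \<Rightarrow> real) \<Rightarrow> bool" where
  "is_norm nrm \<longleftrightarrow> (\<forall>x. 0 \<le> nrm x) \<and> (\<forall>x. nrm x = 0 \<longleftrightarrow> x = 0)
     \<and> (\<forall>x y. nrm (x + y) \<le> nrm x + nrm y) \<and> (\<forall>a x. nrm (a *\<^sub>R x) = \<bar>a\<bar> * nrm x)"

definition dual_norm :: "('a::real_inner \<Rightarrow> real) \<Rightarrow> 'a \<Rightarrow> real" where
  "dual_norm nrm y = Sup {y \<bullet> w | w. nrm w \<le> 1}"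

definition sgnp :: "real \<Rightarrow> real" where
  "sgnp x = (if x \<ge> 0 then 1 else -1)"

definition pred_label :: "('a::real_inner \<Rightarrow> real) \<Rightarrow> real \<Rightarrow> 'a \<Rightarrow> 'a \<Rightarrow> real \<Rightarrow> real" where
  "pred_label nrm c x y b = sgnp (y \<bullet> x + b - 2 * dual_norm nrm y / c)"

definition resp :: "('a::real_inner \<Rightarrow> real) \<Rightarrow> real \<Rightarrow> ('a \<Rightarrow> 'a) \<Rightarrow> 'a \<Rightarrow> 'a \<Rightarrow> real \<Rightarrow> 'a" where
  "resp nrm c v A y b =
     (if y = 0 then A
      else (let m = (y \<bullet> A + b) / dual_norm nrm y in
            if 0 \<le> m \<and> m < 2 / c then A + (2 / c - m) *\<^sub>R v y else A))"

definition proxy :: "('a::real_inner \<Rightarrow> real) \<Rightarrow> real \<Rightarrow> ('a \<Rightarrow> 'a) \<Rightarrow> ('a \<Rightarrow> real)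
                      \<Rightarrow> 'a \<Rightarrow> 'a \<Rightarrow> real \<Rightarrow> 'a" where
  "proxy nrm c v lab A y b =
     (if y = 0 then A
      else (let m = (y \<bullet> A + b) / dual_norm nrm y in
            if 0 \<le> m \<and> m < 2 / c \<and> lab A = -1 then A - m *\<^sub>R v y
            else if 0 \<le> m \<and> m < 2 / c \<and> lab A = 1 then A + (2 / c - m) *\<^sub>R v y
            else A))"

definition hinge :: "('a::real_inner) \<Rightarrow> 'a \<Rightarrow> real \<Rightarrow> real" where
  "hinge q \<xi> l = max 0 (1 - l * (q \<bullet> \<xi>))"

primrec spp :: "('a::euclidean_space \<Rightarrow> real) \<Rightarrow> real \<Rightarrow> ('a \<Rightarrow> 'a) \<Rightarrow> ('a \<Rightarrow> real)
                 \<Rightarrow> ('a \<times> real) set \<Rightarrow> real \<Rightarrow> (nat \<Rightarrow> 'a) \<Rightarrow> nat \<Rightarrow> 'a \<times> real" where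
  "spp nrm c v lab L \<gamma> As 0 = (0, 0)"
| "spp nrm c v lab L \<gamma> As (Suc t) =
     (let q = spp nrm c v lab L \<gamma> As t; y = fst q; b = snd q; A = As t;
          z = (if pred_label nrm c (resp nrm c v A y b) y b \<noteq> lab A
               then q + \<gamma> *\<^sub>R (lab A *\<^sub>R (proxy nrm c v lab A y b, 1))
               else q)
      in closest_point L z)"

definition mistakes :: "('a::euclidean_space \<Rightarrow> real) \<Rightarrow> real \<Rightarrow> ('a \<Rightarrow> 'a) \<Rightarrow> ('a \<Rightarrow> real)
                 \<Rightarrow> ('a \<times> real) set \<Rightarrow> real \<Rightarrow> (nat \<Rightarrow> 'a) \<Rightarrow> nat \<Rightarrow> nat set" where
  "mistakes nrm c v lab L \<gamma> As T =
     {t \<in> {0..T}. pred_label nrm c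
         (resp nrm c v (As t) (fst (spp nrm c v lab L \<gamma> As t)) (snd (spp nrm c v lab L \<gamma> As t)))
         (fst (spp nrm c v lab L \<gamma> As t)) (snd (spp nrm c v lab L \<gamma> As t)) \<noteq> lab (As t)}"

definition bnd_D :: "'a::euclidean_space set \<Rightarrow> real" where
  "bnd_D \<A> = Sup (norm ` \<A>)"

definition C_norm :: "('a::euclidean_space \<Rightarrow> 'a) \<Rightarrow> real" where
  "C_norm v = Sup (range (\<lambda>y. norm (v y)))"

definition D_tilde :: "'a::euclidean_space set \<Rightarrow> real \<Rightarrow> ('a \<Rightarrow> 'a) \<Rightarrow> real" where
  "D_tilde \<A> c v = bnd_D \<A> + 2 / c * C_norm v"

end

theory Submission
  imports Defs
begin

text \<open>The classical perceptron argument survives both the strategic behaviour and the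
  projection. On a mistake the agent's manipulation is exactly undone by the proxy features
  \<open>\<xi>\<^sub>t = (s(A\<^sub>t,y\<^sub>t,b\<^sub>t), 1)\<close>, so that \<open>\<ell>(A\<^sub>t) (q\<^sub>t \<bullet> \<xi>\<^sub>t) \<le> 0\<close>; and the Euclidean projection onto a
  closed convex cone containing the comparator \<open>u = (y, b)\<close> can only increase \<open>u \<bullet> q\<close> and
  decrease \<open>\<parallel>q\<parallel>\<close>. Hence \<open>u \<bullet> q\<^sub>T\<^sub>+\<^sub>1\<close> dominates the sum of \<open>1 - hinge\<close> over the mistakes, while
  \<open>\<parallel>q\<^sub>T\<^sub>+\<^sub>1\<parallel>\<^sup>2 \<le> |M| (D'\<^sup>2 + 1)\<close> because every proxy has norm at most \<open>D' = D + 2 C / c\<close>;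
  Cauchy--Schwarz combines the two.\<close>

lemma is_normD:
  assumes "is_norm nrm"
  shows "nrm 0 = 0" "\<And>x. 0 \<le> nrm x" "\<And>x. nrm x = 0 \<longleftrightarrow> x = 0"
    "\<And>x y. nrm (x + y) \<le> nrm x + nrm y" "\<And>a x. nrm (a *\<^sub>R x) = \<bar>a\<bar> * nrm x"
  using assms unfolding is_norm_def by auto

lemma is_norm_convex_on:
  assumes "is_norm nrm"
  shows "convex_on UNIV nrm"
proof (rule convex_onI)
  fix t :: real and x y assume "0 < t" "t < 1"
  then show "nrm ((1 - t) *\<^sub>R x + t *\<^sub>R y) \<le> (1 - t) * nrm x + t * nrm y"
    using is_normD(4,5)[OF assms] by (smt (verit))
qed simp

lemma is_norm_lower_bound:
  fixes nrm :: "'a::euclidean_space \<Rightarrow> real"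
  assumes nrm: "is_norm nrm"
  obtains m where "m > 0" "\<And>x. m * norm x \<le> nrm x"
proof -
  have "continuous_on (sphere 0 1) nrm"
    using convex_on_continuous[OF open_UNIV is_norm_convex_on[OF nrm]]
    by (rule continuous_on_subset) simp
  moreover have "sphere (0::'a) 1 \<noteq> {}" by simp
  ultimately obtain x0 where x0: "x0 \<in> sphere (0::'a) 1" "\<And>x. x \<in> sphere 0 1 \<Longrightarrow> nrm x0 \<le> nrm x"
    using continuous_attains_inf[OF compact_sphere] by blast
  have pos: "nrm x0 > 0"
    using x0(1) is_normD(2,3)[OF nrm, of x0] by auto
  have "nrm x0 * norm x \<le> nrm x" for x
  proof (cases "x = 0")
    case False
    then have "nrm x0 \<le> nrm ((1 / norm x) *\<^sub>R x)" by (intro x0(2)) simp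
    also have "\<dots> = nrm x / norm x" using is_normD(5)[OF nrm] by simp
    finally show ?thesis using False by (simp add: field_simps)
  qed (simp add: is_normD(1)[OF nrm])
  with pos show thesis by (rule that)
qed

lemma norm_le_C_norm:
  fixes nrm :: "'a::euclidean_space \<Rightarrow> real"
  assumes nrm: "is_norm nrm" and v0: "v 0 = 0"
    and v_ball: "\<And>y. y \<noteq> 0 \<Longrightarrow> nrm (v y) \<le> 1"
  shows "norm (v z) \<le> C_norm v"
proof -
  obtain m where m: "m > 0" "\<And>x. m * norm x \<le> nrm x"
    using is_norm_lower_bound[OF nrm] by blast
  have "norm (v y) \<le> 1 / m" for y
    using m(2)[of "v y"] v_ball[of y] m(1) v0 by (cases "y = 0") (auto simp: field_simps)
  then have "bdd_above (range (\<lambda>y. norm (v y)))" by (rule bdd_aboveI2)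
  then show ?thesis unfolding C_norm_def by (rule cSUP_upper[rotated]) simp
qed

lemma norm_le_bnd_D:
  assumes "bounded \<A>" "A \<in> \<A>"
  shows "norm A \<le> bnd_D \<A>"
  unfolding bnd_D_def using assms
  by (intro cSUP_upper) (simp_all add: bounded_imp_bdd_above bounded_norm_comp)

lemma dual_norm_0:
  assumes "is_norm nrm"
  shows "dual_norm nrm 0 = 0"
proof -
  have "{(0::'a) \<bullet> w | w. nrm w \<le> 1} = {0}"
    using is_normD(1)[OF assms] by (auto intro!: exI[of _ 0])
  then show ?thesis unfolding dual_norm_def by simp
qed

lemma dual_norm_eq_inner_argmax:
  assumes nrm: "is_norm nrm" and y: "y \<noteq> 0"
    and v: "nrm (v y) \<le> 1" "\<And>w. nrm w \<le> 1 \<Longrightarrow> y \<bullet> w \<le> y \<bullet> v y"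
  shows "dual_norm nrm y = y \<bullet> v y" "y \<bullet> v y > 0"
proof -
  show "dual_norm nrm y = y \<bullet> v y"
    unfolding dual_norm_def by (rule cSup_eq_maximum) (use v in auto)
  have ny: "nrm y > 0" using is_normD(2,3)[OF nrm, of y] y by linarith
  have "nrm ((1 / nrm y) *\<^sub>R y) = 1" using is_normD(5)[OF nrm] ny by simp
  then have "y \<bullet> ((1 / nrm y) *\<^sub>R y) \<le> y \<bullet> v y" by (rule v(2)[OF eq_refl])
  then have "(y \<bullet> y) / nrm y \<le> y \<bullet> v y" by simp
  moreover have "(y \<bullet> y) / nrm y > 0" using y ny by simp
  ultimately show "y \<bullet> v y > 0" by linarith
qed

text \<open>The heart of the strategic analysis: a misclassified agent either manipulated into the
  positive region (then \<open>\<ell> = -1\<close> and the proxy lies exactly on the hyperplane \<open>y \<bullet> x + b = 0\<close>)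
  or did not manipulate (then its unmanipulated margin already has the wrong sign).\<close>
lemma mistake_imp_proxy_margin_nonpos:
  fixes nrm :: "'a::euclidean_space \<Rightarrow> real"
  assumes nrm: "is_norm nrm" and c: "c > 0"
    and v_argmax: "\<And>y. y \<noteq> 0 \<Longrightarrow> nrm (v y) \<le> 1 \<and> (\<forall>w. nrm w \<le> 1 \<longrightarrow> y \<bullet> w \<le> y \<bullet> v y)"
    and lab: "lab A \<in> {-1, 1}"
    and mistake: "pred_label nrm c (resp nrm c v A y b) y b \<noteq> lab A"
  shows "lab A * ((y, b) \<bullet> (proxy nrm c v lab A y b, 1)) \<le> 0"
proof (cases "y = 0")
  case True
  then show ?thesis using mistake lab dual_norm_0[OF nrm]
    by (auto simp: pred_label_def resp_def proxy_def sgnp_def split: if_splits)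
next
  case False
  define d where "d = y \<bullet> v y"
  have dn: "dual_norm nrm y = d" and d0: "d > 0"
    using dual_norm_eq_inner_argmax[OF nrm False] v_argmax[OF False] unfolding d_def by auto
  define m where "m = (y \<bullet> A + b) / d"
  have margin: "y \<bullet> A + b = m * d" unfolding m_def using d0 by simp
  show ?thesis
  proof (cases "0 \<le> m \<and> m < 2 / c")
    case True
    have "y \<bullet> (A + (2 / c - m) *\<^sub>R v y) + b = 2 * d / c"
      using margin by (simp add: inner_add_right d_def[symmetric] algebra_simps)
    then have "pred_label nrm c (resp nrm c v A y b) y b = 1"
      using False True by (simp add: resp_def pred_label_def sgnp_def dn m_def Let_def)
    then have "lab A = -1" using mistake lab by auto
    then have "proxy nrm c v lab A y b = A - m *\<^sub>R v y"
      using False True by (simp add: proxy_def dn m_def Let_def)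
    then have "(y, b) \<bullet> (proxy nrm c v lab A y b, 1) = (y \<bullet> A + b) - m * d"
      by (simp add: inner_diff_right d_def)
    then show ?thesis using margin by simp
  next
    case no_move: False
    have r: "resp nrm c v A y b = A" and p: "proxy nrm c v lab A y b = A"
      using False no_move by (auto simp: resp_def proxy_def dn m_def Let_def)
    have "2 * d / c \<le> m * d" if "m \<ge> 2 / c" using mult_right_mono[OF that, of d] d0 by simp
    moreover have "m * d < 0" if "m < 0" using that d0 by (simp add: mult_neg_pos)
    moreover have "2 * d / c > 0" using d0 c by simp
    ultimately show ?thesis
      using no_move mistake lab margin
      by (auto simp: pred_label_def sgnp_def r p dn split: if_splits)
  qed
qed

lemma norm_proxy_le:
  assumes c: "c > 0" and A: "norm A \<le> D" and v: "norm (v y) \<le> C"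
  shows "norm (proxy nrm c v lab A y b) \<le> D + 2 / c * C"
proof -
  have C0: "C \<ge> 0" using v norm_ge_zero order_trans by blast
  have "norm A \<le> D + 2 / c * C" using A C0 c by (simp add: add_increasing2)
  moreover have shifted: "norm (A + a *\<^sub>R v y) \<le> D + 2 / c * C" if "\<bar>a\<bar> \<le> 2 / c" for a
  proof -
    have "norm (A + a *\<^sub>R v y) \<le> norm A + \<bar>a\<bar> * norm (v y)"
      by (metis norm_triangle_ineq norm_scaleR)
    also have "\<bar>a\<bar> * norm (v y) \<le> 2 / c * C" using that v c by (intro mult_mono) auto
    finally show ?thesis using A by linarith
  qed
  ultimately show ?thesis
    using shifted[of "- ((y \<bullet> A + b) / dual_norm nrm y)"] shifted[of "2 / c - (y \<bullet> A + b) / dual_norm nrm y"]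
    by (auto simp: proxy_def Let_def)
qed

lemma inner_le_inner_closest_point_cone:
  fixes L :: "'a::euclidean_space set"
  assumes L: "closed L" "convex L" "cone L" and u: "u \<in> L"
  shows "u \<bullet> z \<le> u \<bullet> closest_point L z"
proof -
  define p where "p = closest_point L z"
  have "p \<in> L" unfolding p_def using L(1) u by (intro closest_point_in_set) auto
  then have "(1/2) *\<^sub>R p + (1/2) *\<^sub>R u \<in> L" using convexD[OF L(2) _ u] by simp
  then have "2 *\<^sub>R ((1/2) *\<^sub>R p + (1/2) *\<^sub>R u) \<in> L" by (rule mem_cone[OF L(3)]) simp
  then have "p + u \<in> L" by (simp add: scaleR_add_right)
  then have "(z - p) \<bullet> ((p + u) - p) \<le> 0" unfolding p_def by (rule closest_point_dot[OF L(2,1)])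
  then show ?thesis unfolding p_def[symmetric] by (simp add: inner_diff_right inner_commute)
qed

lemma norm_closest_point_cone_le:
  fixes L :: "'a::euclidean_space set"
  assumes L: "closed L" "convex L" "cone L" "L \<noteq> {}"
  shows "norm (closest_point L z) \<le> norm z"
proof -
  have "0 \<in> L" using cone_contains_0[OF L(3)] L(4) by simp
  with closest_point_lipschitz[OF L(2,1,4), of z 0] show ?thesis
    by (simp add: closest_point_self)
qed

lemma projected_perceptron_invariant:
  fixes q \<xi> :: "nat \<Rightarrow> 'a::euclidean_space"
  assumes L: "closed L" "convex L" "cone L" and u: "u \<in> L"
    and q0: "q 0 = 0"
    and q_step: "\<And>t. q (Suc t) = closest_point L (if mis t then q t + ell t *\<^sub>R \<xi> t else q t)"
    and ell: "\<And>t. t < n \<Longrightarrow> ell t \<in> {-1, 1}"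
    and \<xi>: "\<And>t. t < n \<Longrightarrow> (norm (\<xi> t))\<^sup>2 \<le> K"
    and margin: "\<And>t. t < n \<Longrightarrow> mis t \<Longrightarrow> ell t * (q t \<bullet> \<xi> t) \<le> 0"
  shows "(\<Sum>t\<in>{t. t < n \<and> mis t}. 1 - hinge u (\<xi> t) (ell t)) \<le> u \<bullet> q n
    \<and> (norm (q n))\<^sup>2 \<le> real (card {t. t < n \<and> mis t}) * K"
  using ell \<xi> margin
proof (induction n)
  case (Suc n)
  let ?M = "{t. t < n \<and> mis t}" and ?h = "\<lambda>t. 1 - hinge u (\<xi> t) (ell t)"
  have IH: "sum ?h ?M \<le> u \<bullet> q n" "(norm (q n))\<^sup>2 \<le> card ?M * K"
    using Suc.IH Suc.prems less_SucI by meson+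
  have proj: "u \<bullet> z \<le> u \<bullet> closest_point L z" "(norm (closest_point L z))\<^sup>2 \<le> (norm z)\<^sup>2" for z
    using inner_le_inner_closest_point_cone[OF L u] norm_closest_point_cone_le[OF L] u
    by (auto intro: power_mono)
  show ?case
  proof (cases "mis n")
    case True
    define z where "z = q n + ell n *\<^sub>R \<xi> n"
    have qS: "q (Suc n) = closest_point L z" using q_step[of n] True by (simp add: z_def)
    have M: "{t. t < Suc n \<and> mis t} = insert n ?M" using True by auto
    have "sum ?h (insert n ?M) = ?h n + sum ?h ?M" by simp
    also have "\<dots> \<le> ell n * (u \<bullet> \<xi> n) + u \<bullet> q n"
      using IH(1) unfolding hinge_def by simp
    also have "\<dots> = u \<bullet> z" by (simp add: z_def inner_add_right)
    finally have inner: "sum ?h (insert n ?M) \<le> u \<bullet> q (Suc n)"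
      using proj(1)[of z] qS by simp
    have ell2: "ell n * ell n = 1" using Suc.prems(1)[of n] by auto
    have "(norm z)\<^sup>2 = (norm (q n))\<^sup>2 + 2 * (ell n * (q n \<bullet> \<xi> n)) + (ell n * ell n) * (norm (\<xi> n))\<^sup>2"
      unfolding z_def power2_norm_eq_inner by (simp add: inner_add_left inner_add_right inner_commute algebra_simps)
    also have "\<dots> \<le> card ?M * K + K"
      using IH(2) Suc.prems(2,3)[of n] True ell2 by simp
    also have "\<dots> = card (insert n ?M) * K" by (simp add: algebra_simps)
    finally have "(norm (q (Suc n)))\<^sup>2 \<le> card (insert n ?M) * K"
      unfolding qS by (rule order_trans[OF proj(2)])
    with inner show ?thesis unfolding M by simp
  next
    case False
    have M: "{t. t < Suc n \<and> mis t} = ?M" using False less_Suc_eq by auto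
    have qS: "q (Suc n) = closest_point L (q n)" using q_step[of n] False by simp
    show ?thesis unfolding M qS using IH proj[of "q n"] by (meson order_trans)
  qed
qed (simp add: q0)

lemma projected_perceptron_mistake_bound:
  fixes q \<xi> :: "nat \<Rightarrow> 'a::euclidean_space"
  assumes L: "closed L" "convex L" "cone L" and u: "u \<in> L"
    and q0: "q 0 = 0"
    and q_step: "\<And>t. q (Suc t) = closest_point L (if mis t then q t + ell t *\<^sub>R \<xi> t else q t)"
    and ell: "\<And>t. t \<le> T \<Longrightarrow> ell t \<in> {-1, 1}"
    and \<xi>: "\<And>t. t \<le> T \<Longrightarrow> (norm (\<xi> t))\<^sup>2 \<le> K"
    and margin: "\<And>t. t \<le> T \<Longrightarrow> mis t \<Longrightarrow> ell t * (q t \<bullet> \<xi> t) \<le> 0"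
    and M: "M = {t \<in> {0..T}. mis t}"
  shows "real (card M) - (\<Sum>t\<in>M. hinge u (\<xi> t) (ell t)) \<le> norm u * sqrt K * sqrt (real (card M))"
proof -
  have "M = {t. t < Suc T \<and> mis t}" using M by auto
  with projected_perceptron_invariant[OF L u q0 q_step, where n = "Suc T" and K = K] ell \<xi> margin
  have inner: "(\<Sum>t\<in>M. 1 - hinge u (\<xi> t) (ell t)) \<le> u \<bullet> q (Suc T)"
    and norm_sq: "(norm (q (Suc T)))\<^sup>2 \<le> card M * K" by auto
  have "real (card M) - (\<Sum>t\<in>M. hinge u (\<xi> t) (ell t)) = (\<Sum>t\<in>M. 1 - hinge u (\<xi> t) (ell t))"
    by (simp add: sum_subtractf)
  also have "\<dots> \<le> norm u * norm (q (Suc T))"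
    using inner Cauchy_Schwarz_ineq2[of u "q (Suc T)"] by linarith
  also have "\<dots> \<le> norm u * sqrt (card M * K)"
    using norm_sq by (intro mult_left_mono real_le_rsqrt) auto
  finally show ?thesis by (simp add: real_sqrt_mult mult_ac)
qed

theorem mainTheorem15:
  fixes \<A> :: "'a::euclidean_space set"
    and nrm :: "'a \<Rightarrow> real" and c :: real and v :: "'a \<Rightarrow> 'a" and lab :: "'a \<Rightarrow> real"
    and L :: "('a \<times> real) set" and As :: "nat \<Rightarrow> 'a" and T :: nat
  assumes nrm: "is_norm nrm"
    and c: "c > 0"
    and v0: "v 0 = 0"
    and v_argmax: "\<And>y. y \<noteq> 0 \<Longrightarrow> nrm (v y) \<le> 1 \<and> (\<forall>w. nrm w \<le> 1 \<longrightarrow> y \<bullet> w \<le> y \<bullet> v y)"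
    and v_scale: "\<And>y k. k > 0 \<Longrightarrow> v (k *\<^sub>R y) = v y"
    and lab: "\<And>A. A \<in> \<A> \<Longrightarrow> lab A \<in> {-1, 1}"
    and bounded: "bounded \<A>"
    and L: "closed L" "convex L" "cone L"
    and As: "\<And>t. t \<le> T \<Longrightarrow> As t \<in> \<A>"
  shows "\<forall>(y, b) \<in> L - {0}.
           (let M = mistakes nrm c v lab L 1 As T in
              real (card M)
              - (\<Sum>t\<in>M. hinge (y, b)
                   (proxy nrm c v lab (As t) (fst (spp nrm c v lab L 1 As t)) (snd (spp nrm c v lab L 1 As t)), 1)
                   (lab (As t)))
              \<le> sqrt ((norm y)\<^sup>2 + b\<^sup>2) * sqrt ((D_tilde \<A> c v)\<^sup>2 + 1) * sqrt (real (card M)))"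
proof -
  define q where "q = spp nrm c v lab L 1 As"
  define mis where "mis t \<longleftrightarrow> pred_label nrm c (resp nrm c v (As t) (fst (q t)) (snd (q t))) (fst (q t)) (snd (q t)) \<noteq> lab (As t)" for t
  define \<xi> where "\<xi> t = (proxy nrm c v lab (As t) (fst (q t)) (snd (q t)), 1::real)" for t
  define M where "M = mistakes nrm c v lab L 1 As T"
  have vC: "norm (v z) \<le> C_norm v" for z
    using norm_le_C_norm[of nrm v, OF nrm v0] v_argmax by blast
  have "norm (fst (\<xi> t)) \<le> D_tilde \<A> c v" if "t \<le> T" for t
    unfolding \<xi>_def D_tilde_def
    using norm_proxy_le[where v = v and y = "fst (q t)", OF c norm_le_bnd_D[OF bounded As[OF that]] vC] by simp
  then have \<xi>_bound: "(norm (\<xi> t))\<^sup>2 \<le> (D_tilde \<A> c v)\<^sup>2 + 1" if "t \<le> T" for t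
    using that by (simp add: \<xi>_def norm_Pair power_mono)
  have margin: "lab (As t) * (q t \<bullet> \<xi> t) \<le> 0" if "t \<le> T" "mis t" for t
    using mistake_imp_proxy_margin_nonpos[of nrm c v lab "As t" "fst (q t)" "snd (q t)",
        OF nrm c v_argmax lab[OF As[OF that(1)]]] that(2)
    unfolding mis_def \<xi>_def by simp
  have q0: "q 0 = 0" by (simp add: q_def zero_prod_def)
  have q_step: "q (Suc t) = closest_point L (if mis t then q t + lab (As t) *\<^sub>R \<xi> t else q t)" for t
    by (simp add: q_def mis_def \<xi>_def Let_def)
  have M_eq: "M = {t \<in> {0..T}. mis t}" by (simp add: M_def mistakes_def mis_def q_def)
  have "real (card M) - (\<Sum>t\<in>M. hinge u (\<xi> t) (lab (As t)))
      \<le> norm u * sqrt ((D_tilde \<A> c v)\<^sup>2 + 1) * sqrt (card M)" if "u \<in> L" for u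
    using lab As
    by (intro projected_perceptron_mistake_bound[OF L that q0 q_step _ \<xi>_bound margin M_eq]) auto
  then show ?thesis by (auto simp: M_def q_def \<xi>_def norm_Pair Let_def)
qed

end
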